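(* Let $G$ be a very well-covered graph of girth at least $4$ (i.e., $G$ contains no triangle). Then the following are equivalent: (i) $\Psi(G)$ is a greedoid on $V(G)$; (ii) $G$ has a unique maximum matching (equivalently, since $G$ has a perfect matching, $G$ has a unique perfect matching).
   Context: All graphs are finite, simple, undirected. For $A\subseteq V(G)$, $N(A)=\{v\in V(G)-A: N(v)\cap A\neq\emptyset\}$ and $N[A]=A\cup N(A)$; $G[X]$ is the subgraph induced by $X$. A stable set is a set of pairwise non-adjacent vertices; $\alpha(G)$ is the maximum size of a stable set. $G$ is well-covered if all its maximal stable sets have the same cardinality, and very well-covered if it is well-covered, has no isolated vertices, and $|V(G)|=2\alpha(G)$. A set $A\subseteq V(G)$ is a local maximum stable set of $G$ if $A$ is a maximum stable set of $G[N[A]]$; $\Psi(G)$ denotes the family of all local maximum stable sets of $G$. A greedoid on a finite set $V$ is a non-empty family $\mathcal{F}\subseteq 2^V$ such that (Accessibility) every non-empty $X\in\mathcal{F}$ has an element $x\in X$ with $X-\{x\}\in\mathcal{F}$, and (Exchange) for all $X,Y\in\mathcal{F}$ with $|X|=|Y|+1$ there is $x\in X-Y$ with $Y\cup\{x\}\in\mathcal{F}$. *)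

theory Defs
  imports Main
begin

definition graph :: "'a set \<Rightarrow> 'a set set \<Rightarrow> bool" where
  "graph V E \<longleftrightarrow> finite V \<and> (\<forall>e\<in>E. \<exists>u v. e = {u, v} \<and> u \<noteq> v \<and> u \<in> V \<and> v \<in> V)"

definition adj :: "'a set set \<Rightarrow> 'a \<Rightarrow> 'a \<Rightarrow> bool" where
  "adj E u v \<longleftrightarrow> {u, v} \<in> E"

definition nbhd :: "'a set \<Rightarrow> 'a set set \<Rightarrow> 'a set \<Rightarrow> 'a set" where
  "nbhd V E A = {v \<in> V - A. \<exists>a\<in>A. adj E v a}"

definition cnbhd :: "'a set \<Rightarrow> 'a set set \<Rightarrow> 'a set \<Rightarrow> 'a set" where
  "cnbhd V E A = A \<union> nbhd V E A"

definition stable_in :: "'a set set \<Rightarrow> 'a set \<Rightarrow> 'a set \<Rightarrow> bool" where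
  "stable_in E X S \<longleftrightarrow> S \<subseteq> X \<and> (\<forall>u\<in>S. \<forall>v\<in>S. \<not> adj E u v)"

definition max_stable_in :: "'a set set \<Rightarrow> 'a set \<Rightarrow> 'a set \<Rightarrow> bool" where
  "max_stable_in E X S \<longleftrightarrow> stable_in E X S \<and> (\<forall>T. stable_in E X T \<longrightarrow> card T \<le> card S)"

definition maximal_stable_in :: "'a set set \<Rightarrow> 'a set \<Rightarrow> 'a set \<Rightarrow> bool" where
  "maximal_stable_in E X S \<longleftrightarrow> stable_in E X S \<and> (\<forall>T. stable_in E X T \<and> S \<subseteq> T \<longrightarrow> T = S)"

definition alpha :: "'a set \<Rightarrow> 'a set set \<Rightarrow> nat" where
  "alpha V E = Max (card ` {S. stable_in E V S})"

definition well_covered :: "'a set \<Rightarrow> 'a set set \<Rightarrow> bool" where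
  "well_covered V E \<longleftrightarrow> (\<forall>S. maximal_stable_in E V S \<longrightarrow> card S = alpha V E)"

definition very_well_covered :: "'a set \<Rightarrow> 'a set set \<Rightarrow> bool" where
  "very_well_covered V E \<longleftrightarrow> well_covered V E \<and> (\<forall>v\<in>V. \<exists>u\<in>V. adj E v u)
     \<and> card V = 2 * alpha V E"

definition triangle_free :: "'a set \<Rightarrow> 'a set set \<Rightarrow> bool" where
  "triangle_free V E \<longleftrightarrow> \<not> (\<exists>a\<in>V. \<exists>b\<in>V. \<exists>c\<in>V. adj E a b \<and> adj E b c \<and> adj E a c)"

definition local_max_stable :: "'a set \<Rightarrow> 'a set set \<Rightarrow> 'a set \<Rightarrow> bool" where
  "local_max_stable V E A \<longleftrightarrow> A \<subseteq> V \<and> max_stable_in E (cnbhd V E A) A"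

definition Psi :: "'a set \<Rightarrow> 'a set set \<Rightarrow> 'a set set" where
  "Psi V E = {A. local_max_stable V E A}"

definition greedoid :: "'a set \<Rightarrow> 'a set set \<Rightarrow> bool" where
  "greedoid V F \<longleftrightarrow> F \<noteq> {} \<and> F \<subseteq> Pow V
     \<and> (\<forall>X\<in>F. X \<noteq> {} \<longrightarrow> (\<exists>x\<in>X. X - {x} \<in> F))
     \<and> (\<forall>X\<in>F. \<forall>Y\<in>F. card X = card Y + 1 \<longrightarrow> (\<exists>x\<in>X - Y. Y \<union> {x} \<in> F))"

definition matching :: "'a set set \<Rightarrow> 'a set set \<Rightarrow> bool" where
  "matching E M \<longleftrightarrow> M \<subseteq> E \<and> (\<forall>e\<in>M. \<forall>f\<in>M. e \<noteq> f \<longrightarrow> e \<inter> f = {})"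

definition maximum_matching :: "'a set set \<Rightarrow> 'a set set \<Rightarrow> bool" where
  "maximum_matching E M \<longleftrightarrow> matching E M \<and> (\<forall>M'. matching E M' \<longrightarrow> card M' \<le> card M)"

end

theory Submission
  imports Defs
begin

(*
  The argument does not need the triangle-freeness
  hypothesis of the statement.

  1. General tools: Hall's marriage theorem, a fixed-point-free permutation inside any finite
     set on which every element has a successor, and induction along accessibility in a greedoid.
  2. Simple graphs: stable sets, matchings, and the mate function of a perfect matching, which is
     a fixed-point-free involution along edges and determines the matching.
  3. Very well-covered graphs satisfy Hall's condition |A| <= |N(A)| for stable sets A; hence they
     have a perfect matching M, and every maximal stable set contains an endpoint of each M-edge.
  4. With m the mate function of M: A is in Psi(G) iff A is stable and m(N(A)) is contained in A.
  5. If M is the only perfect matching, a failure of accessibility or of exchange would give an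
     M-alternating cycle and thus a second perfect matching. Conversely, if Psi(G) is a greedoid,
     accessibility keeps every member of Psi(G) away from the vertices where a second perfect
     matching differs from M, but a maximal stable set through such a vertex belongs to Psi(G).
  As perfect and maximum matchings coincide here, the theorem follows.
*)

definition hall_condition :: "'i set \<Rightarrow> ('i \<Rightarrow> 'b set) \<Rightarrow> bool" where
  "hall_condition I N \<longleftrightarrow> (\<forall>J\<subseteq>I. card J \<le> card (\<Union>(N ` J)))"

lemma hall_condition_mono:
  "hall_condition I N \<Longrightarrow> J \<subseteq> I \<Longrightarrow> hall_condition J N"
  unfolding hall_condition_def by blast

lemma hall_critical_remainder:
  assumes hall: "hall_condition I N" and fin: "finite I" "\<forall>i\<in>I. finite (N i)"
    and J: "J \<subseteq> I" "card (\<Union>(N ` J)) = card J"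
  shows "hall_condition (I - J) (\<lambda>k. N k - \<Union>(N ` J))"
  unfolding hall_condition_def
proof (intro allI impI)
  fix K assume K: "K \<subseteq> I - J"
  define U where "U = \<Union>(N ` J)"
  have finK: "finite K" and finJ: "finite J" using K J(1) fin(1) by (auto intro: finite_subset)
  have finU: "finite U" "finite (\<Union>(N ` K))" using finK finJ fin(2) K J(1) by (auto simp: U_def)
  have "card K + card J = card (K \<union> J)" using finK finJ K by (intro card_Un_disjoint[symmetric]) blast+
  also have "\<dots> \<le> card (\<Union>(N ` (K \<union> J)))"
    using hall K J(1) unfolding hall_condition_def by (meson Diff_subset Un_least order_trans)
  also have "\<Union>(N ` (K \<union> J)) = (\<Union>(N ` K) - U) \<union> U" unfolding U_def by auto
  also have "card \<dots> = card (\<Union>(N ` K) - U) + card J"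
    using finU J(2) by (subst card_Un_disjoint) (auto simp: U_def)
  finally have "card K \<le> card (\<Union>(N ` K) - U)" by linarith
  moreover have "\<Union>((\<lambda>k. N k - U) ` K) = \<Union>(N ` K) - U" by blast
  ultimately show "card K \<le> card (\<Union>((\<lambda>k. N k - \<Union>(N ` J)) ` K))" unfolding U_def by simp
qed

lemma hall_slack_remainder:
  assumes slack: "\<forall>J. J \<subseteq> I \<and> J \<noteq> {} \<and> J \<noteq> I \<longrightarrow> card J < card (\<Union>(N ` J))"
    and fin: "finite I" "\<forall>i\<in>I. finite (N i)" and i: "i \<in> I"
  shows "hall_condition (I - {i}) (\<lambda>j. N j - {t})"
  unfolding hall_condition_def
proof (intro allI impI)
  fix J assume J: "J \<subseteq> I - {i}"
  show "card J \<le> card (\<Union>((\<lambda>j. N j - {t}) ` J))"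
  proof (cases "J = {}")
    case False
    have "finite (\<Union>(N ` J))" using J fin by (auto intro: finite_subset)
    then have "card (\<Union>(N ` J)) \<le> card (\<Union>(N ` J) - {t}) + 1"
      by (cases "t \<in> \<Union>(N ` J)") (auto simp: card_Diff_singleton_if)
    moreover have "card J < card (\<Union>(N ` J))" using slack J False i by blast
    moreover have "\<Union>((\<lambda>j. N j - {t}) ` J) = \<Union>(N ` J) - {t}" by blast
    ultimately show ?thesis by simp
  qed simp
qed

lemma representatives_combine:
  assumes J: "J \<subseteq> I" and f1: "inj_on f1 J" "\<forall>i\<in>J. f1 i \<in> N i"
    and f2: "inj_on f2 (I - J)" "\<forall>i\<in>I - J. f2 i \<in> N i - \<Union>(N ` J)"
  shows "\<exists>f. inj_on f I \<and> (\<forall>i\<in>I. f i \<in> N i)"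
proof -
  define f where "f i = (if i \<in> J then f1 i else f2 i)" for i
  have "inj_on f J" "inj_on f (I - J)" using f1(1) f2(1) unfolding f_def inj_on_def by auto
  moreover have "f ` J \<inter> f ` (I - J) = {}" using f1(2) f2(2) unfolding f_def by fastforce
  ultimately have "inj_on f (J \<union> (I - J))" unfolding inj_on_Un by blast
  moreover have "J \<union> (I - J) = I" using J by blast
  moreover have "\<forall>i\<in>I. f i \<in> N i" using f1(2) f2(2) unfolding f_def by auto
  ultimately show ?thesis by metis
qed

text \<open>Hall's marriage theorem, by induction on the size of the index set: split along a critical
  subfamily if there is one, and otherwise choose any representative for one index.\<close>
theorem hall:
  assumes "finite I" "\<forall>i\<in>I. finite (N i)" "hall_condition I N"
  shows "\<exists>f. inj_on f I \<and> (\<forall>i\<in>I. f i \<in> N i)"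
  using assms
proof (induction "card I" arbitrary: I N rule: less_induct)
  case less
  note fin = less.prems(1,2) and hall = less.prems(3)
  show ?case
  proof (cases "\<exists>J. J \<subseteq> I \<and> J \<noteq> {} \<and> J \<noteq> I \<and> card (\<Union>(N ` J)) = card J")
    case True
    then obtain J where J: "J \<subseteq> I" "J \<noteq> {}" "J \<noteq> I" "card (\<Union>(N ` J)) = card J" by blast
    have finJ: "finite J" using J(1) fin(1) by (rule finite_subset)
    have "card J < card I" using J(1,3) fin(1) by (meson psubsetI psubset_card_mono)
    then obtain f1 where f1: "inj_on f1 J" "\<forall>i\<in>J. f1 i \<in> N i"
      using less.hyps[OF _ finJ _ hall_condition_mono[OF hall J(1)]] fin(2) J(1) by blast
    have "card (I - J) = card I - card J" using finJ J(1) by (rule card_Diff_subset)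
    moreover have "0 < card J" using finJ J(2) by auto
    moreover have "card J \<le> card I" using fin(1) J(1) by (rule card_mono)
    ultimately have "card (I - J) < card I" by linarith
    then obtain f2 where "inj_on f2 (I - J)" "\<forall>i\<in>I - J. f2 i \<in> N i - \<Union>(N ` J)"
      using less.hyps[OF _ _ _ hall_critical_remainder[OF hall fin J(1,4)]] fin by blast
    then show ?thesis using representatives_combine[OF J(1) f1] by blast
  next
    case False
    have slack: "\<forall>J. J \<subseteq> I \<and> J \<noteq> {} \<and> J \<noteq> I \<longrightarrow> card J < card (\<Union>(N ` J))"
    proof (intro allI impI)
      fix J assume J: "J \<subseteq> I \<and> J \<noteq> {} \<and> J \<noteq> I"
      have "card J \<le> card (\<Union>(N ` J))" using hall J unfolding hall_condition_def by blast
      moreover have "card (\<Union>(N ` J)) \<noteq> card J" using False J by blast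
      ultimately show "card J < card (\<Union>(N ` J))" by linarith
    qed
    show ?thesis
    proof (cases "I = {}")
      case False
      then obtain i where i: "i \<in> I" by blast
      have "card {i} \<le> card (\<Union>(N ` {i}))" using hall i unfolding hall_condition_def by blast
      then have "N i \<noteq> {}" by auto
      then obtain t where t: "t \<in> N i" by blast
      have "card (I - {i}) < card I" using fin(1) i by (rule card_Diff1_less)
      then obtain f' where f': "inj_on f' (I - {i})" "\<forall>j\<in>I - {i}. f' j \<in> N j - {t}"
        using less.hyps[OF _ _ _ hall_slack_remainder[OF slack fin i]] fin by blast
      define f where "f = f'(i := t)"
      have "inj_on f I"
        using f' by (auto simp: f_def inj_on_def)
      moreover have "\<forall>j\<in>I. f j \<in> N j" using f' t unfolding f_def by auto
      ultimately show ?thesis by blast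
    qed simp
  qed
qed

text \<open>If every element of a finite nonempty set has an R-successor different from itself, some
  nonempty subset carries a fixed-point-free permutation along R: a minimal invariant set of a
  chosen successor function.\<close>
lemma finite_successor_cycle:
  assumes fin: "finite D" and ne: "D \<noteq> {}" and succ: "\<forall>x\<in>D. \<exists>y\<in>D. y \<noteq> x \<and> R x y"
  shows "\<exists>C \<sigma>. C \<subseteq> D \<and> C \<noteq> {} \<and> bij_betw \<sigma> C C \<and> (\<forall>c\<in>C. \<sigma> c \<noteq> c \<and> R c (\<sigma> c))"
proof -
  have "\<forall>x\<in>D. \<exists>y. y \<in> D \<and> y \<noteq> x \<and> R x y" using succ by blast
  then obtain g where g: "\<forall>x\<in>D. g x \<in> D \<and> g x \<noteq> x \<and> R x (g x)" by (rule bchoice[elim_format]) blast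
  define invariant where "invariant C \<longleftrightarrow> C \<subseteq> D \<and> C \<noteq> {} \<and> g ` C \<subseteq> C" for C
  have "invariant D" using ne g unfolding invariant_def by blast
  then obtain C where C: "invariant C" and least: "\<And>C'. invariant C' \<Longrightarrow> card C \<le> card C'"
    using ex_has_least_nat[of invariant D card] by blast
  have finC: "finite C" using C fin unfolding invariant_def by (blast intro: finite_subset)
  have "invariant (g ` C)" using C unfolding invariant_def by blast
  then have "card C \<le> card (g ` C)" by (rule least)
  moreover have "g ` C \<subseteq> C" using C unfolding invariant_def by blast
  ultimately have "g ` C = C" using finC by (meson card_seteq)
  moreover have "inj_on g C" using finC \<open>g ` C = C\<close> by (intro finite_surj_inj) auto
  ultimately have "bij_betw g C C" unfolding bij_betw_def by blast
  then show ?thesis using C g unfolding invariant_def by blast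
qed

lemma inverse_permutation:
  assumes "bij_betw \<sigma> C C" and "\<forall>c\<in>C. \<sigma> c \<noteq> c \<and> R c (\<sigma> c)"
  shows "\<exists>\<tau>. bij_betw \<tau> C C \<and> (\<forall>c\<in>C. \<tau> c \<noteq> c \<and> R (\<tau> c) c)"
proof (intro exI conjI ballI)
  show "bij_betw (inv_into C \<sigma>) C C" using assms(1) by (rule bij_betw_inv_into)
  fix c assume c: "c \<in> C"
  then have "inv_into C \<sigma> c \<in> C" "\<sigma> (inv_into C \<sigma> c) = c"
    using assms(1) by (auto simp: bij_betw_def intro: inv_into_into f_inv_into_f)
  then show "inv_into C \<sigma> c \<noteq> c" "R (inv_into C \<sigma> c) c" using assms(2) by metis+
qed

lemma greedoid_induct:
  assumes gr: "greedoid V F" and fin: "finite V" and X: "X \<in> F"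
    and empty: "P {}" and step: "\<And>X x. X \<in> F \<Longrightarrow> x \<in> X \<Longrightarrow> X - {x} \<in> F \<Longrightarrow> P (X - {x}) \<Longrightarrow> P X"
  shows "P X"
  using X
proof (induction "card X" arbitrary: X rule: less_induct)
  case less
  show ?case
  proof (cases "X = {}")
    case False
    have acc: "\<forall>X\<in>F. X \<noteq> {} \<longrightarrow> (\<exists>x\<in>X. X - {x} \<in> F)" and "F \<subseteq> Pow V"
      using gr unfolding greedoid_def by blast+
    then obtain x where x: "x \<in> X" "X - {x} \<in> F" using False less.prems by blast
    have "finite X" using \<open>F \<subseteq> Pow V\<close> less.prems fin by (blast intro: finite_subset)
    then have "card (X - {x}) < card X" using x(1) by (rule card_Diff1_less)
    then have "P (X - {x})" using x(2) by (rule less.hyps)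
    then show ?thesis using step less.prems x by blast
  qed (simp add: empty)
qed

definition mate :: "'a set set \<Rightarrow> 'a \<Rightarrow> 'a" where
  "mate M v = (THE u. {v, u} \<in> M)"

definition matching_of :: "'a set \<Rightarrow> ('a \<Rightarrow> 'a) \<Rightarrow> 'a set set" where
  "matching_of V p = (\<lambda>v. {v, p v}) ` V"

locale simple_graph =
  fixes V :: "'a set" and E :: "'a set set"
  assumes graph: "graph V E"
begin

lemma finite_V: "finite V"
  using graph unfolding graph_def by blast

lemma edgeE:
  assumes "e \<in> E"
  obtains u v where "e = {u, v}" "u \<noteq> v" "u \<in> V" "v \<in> V"
  using graph assms unfolding graph_def by blast

lemma finite_E: "finite E"
proof -
  have "E \<subseteq> Pow V" by (blast elim: edgeE)
  then show ?thesis using finite_V by (simp add: finite_subset)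
qed

lemma adj_sym: "adj E u v \<longleftrightarrow> adj E v u"
  unfolding adj_def by (simp add: insert_commute)

lemma adj_irrefl: "\<not> adj E v v"
  unfolding adj_def by (auto elim: edgeE simp: doubleton_eq_iff)

lemma adj_V: "adj E u v \<Longrightarrow> u \<in> V \<and> v \<in> V"
  unfolding adj_def by (auto elim!: edgeE simp: doubleton_eq_iff)

lemma stable_subset: "stable_in E X S \<Longrightarrow> S' \<subseteq> S \<Longrightarrow> stable_in E X S'"
  unfolding stable_in_def by blast

lemma stable_finite: "stable_in E V S \<Longrightarrow> finite S"
  unfolding stable_in_def using finite_V by (blast intro: finite_subset)

lemma stable_singleton: "v \<in> V \<Longrightarrow> stable_in E V {v}"
  unfolding stable_in_def using adj_irrefl by simp

lemma maximal_stable_extend: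
  assumes "finite X" "stable_in E X S0"
  obtains S where "S0 \<subseteq> S" "maximal_stable_in E X S"
proof -
  have "{S. stable_in E X S} \<subseteq> Pow X" unfolding stable_in_def by blast
  then have "finite {S. stable_in E X S}" using assms(1) by (simp add: finite_subset)
  moreover have "S0 \<in> {S. stable_in E X S}" using assms(2) by simp
  ultimately obtain S where S: "S \<in> {S. stable_in E X S}" "S0 \<subseteq> S"
    and max: "\<forall>T\<in>{S. stable_in E X S}. S \<subseteq> T \<longrightarrow> S = T"
    by (meson finite_has_maximal2)
  have "maximal_stable_in E X S" using S(1) max unfolding maximal_stable_in_def by auto
  then show ?thesis using that S(2) by blast
qed

lemma maximal_stableD:
  assumes "maximal_stable_in E X S" "v \<in> X" "v \<notin> S"
  shows "\<exists>s\<in>S. adj E v s"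
proof (rule ccontr)
  assume "\<not> ?thesis"
  then have "stable_in E X (insert v S)"
    using assms adj_irrefl adj_sym unfolding maximal_stable_in_def stable_in_def by auto
  then show False using assms unfolding maximal_stable_in_def by blast
qed

lemma maximal_stableI:
  assumes "stable_in E X S" "\<forall>v\<in>X - S. \<exists>s\<in>S. adj E v s"
  shows "maximal_stable_in E X S"
  using assms unfolding maximal_stable_in_def stable_in_def by blast

lemma exchange_maximal_stable:
  assumes A: "stable_in E V A" and B: "maximal_stable_in E (nbhd V E A) B"
    and T: "maximal_stable_in E (V - (A \<union> nbhd V E A \<union> nbhd V E B)) T"
  shows "maximal_stable_in E V (B \<union> (A - nbhd V E B) \<union> T)"
proof (rule maximal_stableI)
  define A1 where "A1 = A - nbhd V E B"
  define W where "W = V - (A \<union> nbhd V E A \<union> nbhd V E B)"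
  have AV: "A \<subseteq> V" and Aind: "\<forall>x\<in>A. \<forall>y\<in>A. \<not> adj E x y" using A unfolding stable_in_def by auto
  have BN: "B \<subseteq> nbhd V E A" and Bind: "\<forall>x\<in>B. \<forall>y\<in>B. \<not> adj E x y"
    using B unfolding maximal_stable_in_def stable_in_def by auto
  have TW: "T \<subseteq> W" and Tind: "\<forall>x\<in>T. \<forall>y\<in>T. \<not> adj E x y"
    using T unfolding W_def maximal_stable_in_def stable_in_def by auto
  have B_A1: "\<not> adj E b a" if "b \<in> B" "a \<in> A1" for a b
    using that AV BN adj_sym unfolding A1_def nbhd_def by blast
  have B_T: "\<not> adj E b t" if "b \<in> B" "t \<in> T" for b t
    using that BN TW adj_sym unfolding W_def nbhd_def by blast
  have A_T: "\<not> adj E a t" if "a \<in> A" "t \<in> T" for a t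
    using that TW adj_sym unfolding W_def nbhd_def by blast
  show "stable_in E V (B \<union> A1 \<union> T)"
    unfolding stable_in_def
  proof (intro conjI ballI)
    show "B \<union> A1 \<union> T \<subseteq> V" using AV BN TW unfolding A1_def W_def nbhd_def by blast
    fix x y assume "x \<in> B \<union> A1 \<union> T" "y \<in> B \<union> A1 \<union> T"
    then show "\<not> adj E x y" using Aind Bind Tind B_A1 B_T A_T adj_sym unfolding A1_def by blast
  qed
  show "\<forall>v\<in>V - (B \<union> A1 \<union> T). \<exists>s\<in>B \<union> A1 \<union> T. adj E v s"
  proof
    fix v assume v: "v \<in> V - (B \<union> A1 \<union> T)"
    consider "v \<in> A" | "v \<in> nbhd V E A" | "v \<in> nbhd V E B" | "v \<in> W" using v unfolding W_def by blast
    then show "\<exists>s\<in>B \<union> A1 \<union> T. adj E v s"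
    proof cases
      case 1
      then have "v \<in> nbhd V E B" using v unfolding A1_def by blast
      then show ?thesis unfolding nbhd_def by blast
    next
      case 2
      then show ?thesis using maximal_stableD[OF B] v by blast
    next
      case 3
      then show ?thesis unfolding nbhd_def by blast
    next
      case 4
      then show ?thesis using maximal_stableD[OF T] v unfolding W_def by blast
    qed
  qed
qed

lemma nbhd_unseen_part:
  assumes A: "stable_in E V A" and BN: "B \<subseteq> nbhd V E A"
  shows "nbhd V E (A - nbhd V E B) \<subseteq> nbhd V E A - B"
proof
  fix v assume "v \<in> nbhd V E (A - nbhd V E B)"
  then obtain x where x: "x \<in> A" "x \<notin> nbhd V E B" "adj E v x" "v \<in> V" unfolding nbhd_def by blast
  have AV: "A \<subseteq> V" and Aind: "\<forall>x\<in>A. \<forall>y\<in>A. \<not> adj E x y" using A unfolding stable_in_def by auto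
  have "v \<notin> A" using x(1,3) Aind by blast
  moreover have "x \<notin> B" using x(1) BN unfolding nbhd_def by blast
  then have "v \<notin> B" using x AV adj_sym unfolding nbhd_def by blast
  ultimately show "v \<in> nbhd V E A - B" using x(1,3,4) unfolding nbhd_def by blast
qed

definition perfect_matching :: "'a set set \<Rightarrow> bool" where
  "perfect_matching M \<longleftrightarrow> matching E M \<and> \<Union>M = V"

lemma matching_disjoint: "matching E M \<Longrightarrow> e \<in> M \<Longrightarrow> f \<in> M \<Longrightarrow> e \<noteq> f \<Longrightarrow> e \<inter> f = {}"
  unfolding matching_def by blast

lemma matching_finite: "matching E M \<Longrightarrow> finite M"
  unfolding matching_def using finite_E by (blast intro: finite_subset)

lemma matching_Union_subset: "matching E M \<Longrightarrow> \<Union>M \<subseteq> V"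
  unfolding matching_def by (blast elim: edgeE)

lemma card_Union_matching:
  assumes M: "matching E M"
  shows "card (\<Union>M) = 2 * card M"
proof -
  have "card (\<Union>M) = sum card M"
  proof (rule card_Union_disjoint)
    show "pairwise disjnt M" unfolding pairwise_def disjnt_def using matching_disjoint[OF M] by blast
    show "finite e" if "e \<in> M" for e
      using that M unfolding matching_def by (blast elim: edgeE)
  qed
  also have "\<dots> = sum (\<lambda>_. 2) M"
    using M unfolding matching_def by (intro sum.cong) (auto elim!: edgeE)
  finally show ?thesis by simp
qed

lemma maximum_iff_perfect:
  assumes M: "perfect_matching M"
  shows "maximum_matching E M' \<longleftrightarrow> perfect_matching M'"
proof -
  have cardV: "card V = 2 * card M" using M card_Union_matching unfolding perfect_matching_def by auto
  have bound: "2 * card M'' \<le> card V" if "matching E M''" for M''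
    using card_mono[OF finite_V matching_Union_subset[OF that]] card_Union_matching[OF that] by simp
  show ?thesis
  proof
    assume "maximum_matching E M'"
    then have M': "matching E M'" "card M \<le> card M'"
      using M unfolding maximum_matching_def perfect_matching_def by auto
    then have "card V \<le> card (\<Union>M')" using cardV card_Union_matching[OF M'(1)] by simp
    then have "\<Union>M' = V" using matching_Union_subset[OF M'(1)] finite_V by (simp add: card_seteq)
    then show "perfect_matching M'" using M' unfolding perfect_matching_def by blast
  next
    assume M': "perfect_matching M'"
    then have "card V = 2 * card M'" using card_Union_matching unfolding perfect_matching_def by auto
    then show "maximum_matching E M'"
      using M' bound unfolding maximum_matching_def perfect_matching_def by auto
  qed
qed

lemma mate_unique:
  assumes M: "matching E M" and e: "{v, u} \<in> M"
  shows "mate M v = u"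
  unfolding mate_def
proof (rule the_equality)
  show "{v, u} \<in> M" by (fact e)
  fix u' assume "{v, u'} \<in> M"
  then have "{v, u'} = {v, u}" using matching_disjoint[OF M _ e] by blast
  then show "u' = u" by (auto simp: doubleton_eq_iff)
qed

lemma mate_in:
  assumes M: "perfect_matching M" and v: "v \<in> V"
  shows "{v, mate M v} \<in> M"
proof -
  obtain e where e: "e \<in> M" "v \<in> e" using M v unfolding perfect_matching_def by blast
  then obtain u where "e = {v, u}"
    using M unfolding perfect_matching_def matching_def by (blast elim: edgeE)
  then show ?thesis using e mate_unique[of M v u] M unfolding perfect_matching_def by simp
qed

lemma mate_adj: "perfect_matching M \<Longrightarrow> v \<in> V \<Longrightarrow> adj E v (mate M v)"
  using mate_in unfolding perfect_matching_def matching_def adj_def by blast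

lemma mate_V: "perfect_matching M \<Longrightarrow> v \<in> V \<Longrightarrow> mate M v \<in> V"
  using mate_adj adj_V by blast

lemma mate_mate: "perfect_matching M \<Longrightarrow> v \<in> V \<Longrightarrow> mate M (mate M v) = v"
  using mate_in mate_unique unfolding perfect_matching_def by (metis insert_commute)

lemma mate_inj: "perfect_matching M \<Longrightarrow> u \<in> V \<Longrightarrow> v \<in> V \<Longrightarrow> mate M u = mate M v \<Longrightarrow> u = v"
  using mate_mate by metis

lemma perfect_matching_of:
  assumes p: "\<forall>v\<in>V. p v \<in> V \<and> p (p v) = v \<and> adj E v (p v)"
  shows "perfect_matching (matching_of V p)" "\<forall>v\<in>V. mate (matching_of V p) v = p v"
proof -
  have "matching E (matching_of V p)"
    unfolding matching_def matching_of_def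
  proof (intro conjI ballI impI)
    show "(\<lambda>v. {v, p v}) ` V \<subseteq> E" using p unfolding adj_def by blast
    fix e f assume "e \<in> (\<lambda>v. {v, p v}) ` V" "f \<in> (\<lambda>v. {v, p v}) ` V" "e \<noteq> f"
    then show "e \<inter> f = {}" using p by (auto simp: doubleton_eq_iff) metis+
  qed
  moreover have "\<Union>(matching_of V p) = V" using p unfolding matching_of_def by blast
  ultimately show "perfect_matching (matching_of V p)" unfolding perfect_matching_def by blast
  show "\<forall>v\<in>V. mate (matching_of V p) v = p v"
    using mate_unique[OF \<open>matching E (matching_of V p)\<close>] unfolding matching_of_def by blast
qed

lemma perfect_matching_eq_mate:
  assumes M: "perfect_matching M"
  shows "M = matching_of V (mate M)"
proof
  show "M \<subseteq> matching_of V (mate M)"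
  proof
    fix e assume e: "e \<in> M"
    then obtain u v where "e = {u, v}" "u \<in> V"
      using M unfolding perfect_matching_def matching_def by (blast elim: edgeE)
    then show "e \<in> matching_of V (mate M)"
      using e mate_unique M unfolding perfect_matching_def matching_of_def by blast
  qed
  show "matching_of V (mate M) \<subseteq> M" using mate_in[OF M] unfolding matching_of_def by blast
qed

lemma perfect_matching_from_injection:
  assumes SV: "S \<subseteq> V" and f: "inj_on f S" "f ` S = V - S" "\<forall>s\<in>S. adj E s (f s)"
  shows "\<exists>M. perfect_matching M"
proof -
  define p where "p v = (if v \<in> S then f v else the_inv_into S f v)" for v
  have "p v \<in> V \<and> p (p v) = v \<and> adj E v (p v)" if v: "v \<in> V" for v
  proof (cases "v \<in> S")
    case True
    then show ?thesis using f unfolding p_def by (auto simp: the_inv_into_f_f)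
  next
    case False
    then obtain s where "s \<in> S" "v = f s" using f(2) v by blast
    then show ?thesis using False f SV adj_sym unfolding p_def by (auto simp: the_inv_into_f_f)
  qed
  then show ?thesis using perfect_matching_of(1) by blast
qed

end

locale very_well_covered_graph = simple_graph +
  assumes very_well_covered: "very_well_covered V E"
begin

lemma no_isolated: "v \<in> V \<Longrightarrow> \<exists>u\<in>V. adj E v u"
  using very_well_covered unfolding very_well_covered_def by blast

lemma card_V: "card V = 2 * alpha V E"
  using very_well_covered unfolding very_well_covered_def by blast

lemma maximal_stable_card: "maximal_stable_in E V S \<Longrightarrow> card S = alpha V E"
  using very_well_covered unfolding very_well_covered_def well_covered_def by blast

lemma stable_card_le_alpha: "stable_in E V S \<Longrightarrow> card S \<le> alpha V E"
proof -
  assume S: "stable_in E V S"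
  have "{S. stable_in E V S} \<subseteq> Pow V" unfolding stable_in_def by blast
  then have "finite {S. stable_in E V S}" using finite_V by (simp add: finite_subset)
  then show ?thesis unfolding alpha_def using S by (intro Max_ge) auto
qed

text \<open>
  Well-coveredness bounds a stable set A by any maximal stable set B of its neighbourhood
  together with the part of A not seen by B: compare the maximal stable set of the previous
  lemma with the stable set A + T.
\<close>
lemma well_covered_exchange:
  assumes A: "stable_in E V A" and B: "maximal_stable_in E (nbhd V E A) B"
  shows "card A \<le> card B + card (A - nbhd V E B)"
proof -
  define W where "W = V - (A \<union> nbhd V E A \<union> nbhd V E B)"
  obtain T where T: "maximal_stable_in E W T"
    using maximal_stable_extend[of W "{}"] finite_V unfolding W_def stable_in_def by auto
  have TW: "T \<subseteq> W" and Tind: "\<forall>x\<in>T. \<forall>y\<in>T. \<not> adj E x y"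
    using T unfolding maximal_stable_in_def stable_in_def by auto
  have "card (B \<union> (A - nbhd V E B) \<union> T) = alpha V E"
    using exchange_maximal_stable[OF A B T[unfolded W_def]] by (rule maximal_stable_card)
  moreover have "card (B \<union> (A - nbhd V E B) \<union> T) \<le> card B + card (A - nbhd V E B) + card T"
    by (meson add_le_mono card_Un_le order.trans order_refl)
  moreover have "stable_in E V (A \<union> T)"
    using A TW Tind adj_sym unfolding W_def stable_in_def nbhd_def by blast
  then have "card (A \<union> T) \<le> alpha V E" by (rule stable_card_le_alpha)
  moreover have "card (A \<union> T) = card A + card T"
    using stable_finite[OF A] finite_subset[OF TW] finite_V TW unfolding W_def
    by (intro card_Un_disjoint) auto
  ultimately show ?thesis by linarith
qed

text \<open>
  By induction on the size of A, removing from A the vertices seen by a maximal stable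
  set B of N(A) and using the exchange bound above.
\<close>
lemma stable_card_le_nbhd:
  assumes "stable_in E V A"
  shows "card A \<le> card (nbhd V E A)"
  using assms
proof (induction "card A" arbitrary: A rule: less_induct)
  case less
  note A = less.prems
  have AV: "A \<subseteq> V" and Aind: "\<forall>x\<in>A. \<forall>y\<in>A. \<not> adj E x y" using A unfolding stable_in_def by auto
  show ?case
  proof (cases "A = {}")
    case False
    then obtain a where a: "a \<in> A" by blast
    then obtain u where u: "u \<in> V" "adj E a u" using no_isolated AV by blast
    have uN: "u \<in> nbhd V E A" using u a Aind adj_sym unfolding nbhd_def by blast
    have finN: "finite (nbhd V E A)" using finite_V unfolding nbhd_def by simp
    obtain B where B: "maximal_stable_in E (nbhd V E A) B"
      using maximal_stable_extend[OF finN, of "{}"] unfolding stable_in_def by auto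
    have BN: "B \<subseteq> nbhd V E A" using B unfolding maximal_stable_in_def stable_in_def by blast
    have "B \<noteq> {}" using maximal_stableD[OF B uN] by auto
    then obtain b where b: "b \<in> B" by blast
    then obtain a' where a': "a' \<in> A" "adj E b a'" using BN unfolding nbhd_def by blast
    then have "a' \<in> nbhd V E B" using b BN AV adj_sym unfolding nbhd_def by blast
    define A1 where "A1 = A - nbhd V E B"
    have "A1 \<subset> A" using a' \<open>a' \<in> nbhd V E B\<close> unfolding A1_def by blast
    then have "card A1 < card A" using stable_finite[OF A] by (rule psubset_card_mono[rotated])
    moreover have "stable_in E V A1" using A by (rule stable_subset) (auto simp: A1_def)
    ultimately have IH: "card A1 \<le> card (nbhd V E A1)" by (rule less.hyps)
    have "nbhd V E A1 \<subseteq> nbhd V E A - B" unfolding A1_def using A BN by (rule nbhd_unseen_part)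
    then have "card (nbhd V E A1) \<le> card (nbhd V E A - B)" using finN by (intro card_mono) auto
    also have "\<dots> = card (nbhd V E A) - card B" using finN BN by (meson card_Diff_subset finite_subset)
    finally have "card (nbhd V E A1) \<le> card (nbhd V E A) - card B" .
    moreover have "card B \<le> card (nbhd V E A)" using finN BN by (rule card_mono)
    ultimately show ?thesis using well_covered_exchange[OF A B] IH unfolding A1_def by linarith
  qed simp
qed

text \<open>
  A very well-covered graph has a perfect matching: by Hall's theorem a maximal stable set S
  can be matched injectively into its neighbours, and counting shows that this covers V - S.
\<close>
lemma perfect_matching_exists: "\<exists>M. perfect_matching M"
proof -
  obtain S where S: "maximal_stable_in E V S"
    using maximal_stable_extend[OF finite_V, of "{}"] unfolding stable_in_def by auto
  have SV: "S \<subseteq> V" and Sind: "\<forall>x\<in>S. \<forall>y\<in>S. \<not> adj E x y"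
    using S unfolding maximal_stable_in_def stable_in_def by auto
  have finS: "finite S" using SV finite_V by (rule finite_subset)
  define N where "N s = {t \<in> V. adj E s t}" for s
  have "hall_condition S N"
    unfolding hall_condition_def
  proof (intro allI impI)
    fix J assume J: "J \<subseteq> S"
    have "stable_in E V J" using S J unfolding maximal_stable_in_def by (meson stable_subset)
    then have "card J \<le> card (nbhd V E J)" by (rule stable_card_le_nbhd)
    also have "\<dots> \<le> card (\<Union>(N ` J))"
      using adj_sym unfolding N_def nbhd_def by (intro card_mono) (auto intro: rev_finite_subset[OF finite_V])
    finally show "card J \<le> card (\<Union>(N ` J))" .
  qed
  moreover have "\<forall>s\<in>S. finite (N s)" unfolding N_def using finite_V by simp
  ultimately obtain f where f: "inj_on f S" "\<forall>s\<in>S. f s \<in> N s"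
    using hall[OF finS] by blast
  have f_adj: "f s \<in> V - S \<and> adj E s (f s)" if "s \<in> S" for s
    using f(2) that Sind unfolding N_def by blast
  have "card (f ` S) = card (V - S)"
    using card_image[OF f(1)] maximal_stable_card[OF S] card_V card_Diff_subset[OF finS SV] by simp
  then have "f ` S = V - S" using f_adj finite_V by (intro card_subset_eq) auto
  then show ?thesis using perfect_matching_from_injection[OF SV f(1)] f_adj by blast
qed

text \<open>A maximal stable set contains an endpoint of every edge of a perfect matching,
  since it has exactly as many elements as the matching has edges.\<close>
lemma maximal_stable_meets_edge:
  assumes M: "perfect_matching M" and S: "maximal_stable_in E V S" and v: "v \<in> V"
  shows "v \<in> S \<or> mate M v \<in> S"
proof (rule ccontr)
  assume miss: "\<not> (v \<in> S \<or> mate M v \<in> S)"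
  have SV: "S \<subseteq> V" and Sind: "\<forall>x\<in>S. \<forall>y\<in>S. \<not> adj E x y"
    using S unfolding maximal_stable_in_def stable_in_def by auto
  have finM: "finite M" using M matching_finite unfolding perfect_matching_def by blast
  have inj: "inj_on (\<lambda>s. {s, mate M s}) S"
  proof (rule inj_onI)
    fix s s' assume s: "s \<in> S" "s' \<in> S" and eq: "{s, mate M s} = {s', mate M s'}"
    show "s = s'"
    proof (rule ccontr)
      assume "s \<noteq> s'"
      then have "s = mate M s'" using eq by (auto simp: doubleton_eq_iff)
      then show False using Sind s mate_adj[OF M, of s'] SV by blast
    qed
  qed
  have sub: "(\<lambda>s. {s, mate M s}) ` S \<subseteq> M - {{v, mate M v}}"
  proof
    fix e assume "e \<in> (\<lambda>s. {s, mate M s}) ` S"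
    then obtain s where s: "s \<in> S" "e = {s, mate M s}" by blast
    then have "e \<in> M" using mate_in[OF M] SV by blast
    moreover have "s \<notin> {v, mate M v}" using s(1) miss by blast
    ultimately show "e \<in> M - {{v, mate M v}}" using s(2) by blast
  qed
  have "card S = card ((\<lambda>s. {s, mate M s}) ` S)" using inj by (simp add: card_image)
  also have "\<dots> \<le> card (M - {{v, mate M v}})" using sub finM by (intro card_mono) auto
  also have "\<dots> < card M"
  proof -
    have "card M > 0" using mate_in[OF M v] finM by (auto simp: card_gt_0_iff)
    then show ?thesis using mate_in[OF M v] finM by simp
  qed
  finally have "2 * card S < card V"
    using M card_Union_matching unfolding perfect_matching_def by auto
  then show False using maximal_stable_card[OF S] card_V by simp
qed

end

locale perfectly_matched = very_well_covered_graph +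
  fixes M :: "'a set set"
  assumes perfect: "perfect_matching M"
begin

abbreviation m :: "'a \<Rightarrow> 'a" where "m \<equiv> mate M"

lemmas m_adj = mate_adj[OF perfect] and m_V = mate_V[OF perfect]
  and m_m = mate_mate[OF perfect] and m_inj = mate_inj[OF perfect]

definition closed :: "'a set \<Rightarrow> bool" where
  "closed A \<longleftrightarrow> (\<forall>a\<in>A. \<forall>w. adj E a w \<longrightarrow> m w \<in> A)"

text \<open>Folding a stable set onto a set B by replacing the vertices outside B with their mates is
  injective, because a stable set never contains both ends of a matching edge.\<close>
lemma fold_inj:
  assumes "stable_in E V T"
  shows "inj_on (\<lambda>x. if x \<in> B then x else m x) T"
proof (rule inj_onI)
  fix x y assume x: "x \<in> T" and y: "y \<in> T"
    and eq: "(if x \<in> B then x else m x) = (if y \<in> B then y else m y)"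
  have V: "x \<in> V" "y \<in> V" and ind: "\<not> adj E x y" "\<not> adj E y x"
    using assms x y unfolding stable_in_def by auto
  show "x = y"
  proof (cases "x \<in> B"; cases "y \<in> B")
    assume "x \<in> B" "y \<notin> B"
    then show ?thesis using eq m_adj[OF V(2)] ind(2) by simp
  next
    assume "x \<notin> B" "y \<in> B"
    then show ?thesis using eq m_adj[OF V(1)] ind(1) by simp
  next
    assume "x \<notin> B" "y \<notin> B"
    then show ?thesis using eq m_inj[OF V] by simp
  qed (use eq in simp)
qed

lemma fold_into_maximal_stable:
  assumes A: "stable_in E V A" and S: "maximal_stable_in E V S" and x: "x \<in> A"
  shows "(if x \<in> S then x else m x) \<in> S \<inter> cnbhd V E A"
proof (cases "x \<in> S")
  case False
  have xV: "x \<in> V" using x A unfolding stable_in_def by blast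
  have "m x \<in> S" using maximal_stable_meets_edge[OF perfect S xV] False by simp
  moreover have "m x \<notin> A" using A x m_adj[OF xV] unfolding stable_in_def by blast
  ultimately show ?thesis using x False m_V[OF xV] m_adj[OF xV] adj_sym
    unfolding cnbhd_def nbhd_def by auto
qed (use x in \<open>auto simp: cnbhd_def\<close>)

text \<open>Local maximum stable sets are closed: otherwise a neighbour w whose mate is outside A,
  together with the fold of A onto a maximal stable set through w, would be a larger stable
  subset of N[A].\<close>
lemma Psi_closed:
  assumes A: "A \<in> Psi V E"
  shows "closed A"
  unfolding closed_def
proof (intro ballI allI impI)
  fix a w assume a: "a \<in> A" and aw: "adj E a w"
  have AV: "A \<subseteq> V" and mx: "max_stable_in E (cnbhd V E A) A"
    using A unfolding Psi_def local_max_stable_def by auto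
  have Aind: "\<forall>x\<in>A. \<forall>y\<in>A. \<not> adj E x y" using mx unfolding max_stable_in_def stable_in_def by blast
  have Ast: "stable_in E V A" using AV Aind unfolding stable_in_def by blast
  show "m w \<in> A"
  proof (rule ccontr)
    assume mw: "m w \<notin> A"
    have wV: "w \<in> V" and wA: "w \<notin> A" using adj_V[OF aw] Aind a aw by auto
    obtain S where wS: "{w} \<subseteq> S" and S: "maximal_stable_in E V S"
      using maximal_stable_extend[OF finite_V stable_singleton[OF wV]] by blast
    define g where "g x = (if x \<in> S then x else m x)" for x
    have "inj_on g A" unfolding g_def using Ast by (rule fold_inj)
    have g_into: "g x \<in> S \<inter> cnbhd V E A" if "x \<in> A" for x
      unfolding g_def using Ast S that by (rule fold_into_maximal_stable)
    have "w \<notin> g ` A"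
    proof
      assume "w \<in> g ` A"
      then obtain x where x: "x \<in> A" "g x = w" by blast
      have "x \<in> V" using x(1) AV by blast
      then have "x \<notin> S \<Longrightarrow> x = m w" using x(2) m_m[of x] unfolding g_def by simp
      then show False using x wA mw unfolding g_def by (cases "x \<in> S") auto
    qed
    have "w \<in> S \<inter> cnbhd V E A" using wS wV wA a aw adj_sym unfolding cnbhd_def nbhd_def by blast
    then have sub: "insert w (g ` A) \<subseteq> S \<inter> cnbhd V E A" using g_into by blast
    have "stable_in E V S" using S unfolding maximal_stable_in_def by blast
    then have "stable_in E (cnbhd V E A) (S \<inter> cnbhd V E A)" unfolding stable_in_def by blast
    then have "card (S \<inter> cnbhd V E A) \<le> card A" using mx unfolding max_stable_in_def by blast
    moreover have "card (insert w (g ` A)) = card A + 1"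
      using \<open>w \<notin> g ` A\<close> \<open>inj_on g A\<close> stable_finite[OF Ast] by (simp add: card_image)
    moreover have "card (insert w (g ` A)) \<le> card (S \<inter> cnbhd V E A)"
      using sub stable_finite[OF \<open>stable_in E V S\<close>] by (intro card_mono) auto
    ultimately show False by linarith
  qed
qed

text \<open>Conversely a closed stable set is a local maximum: folding any stable subset of N[A]
  onto A maps it injectively into A.\<close>
lemma closed_in_Psi:
  assumes Ast: "stable_in E V A" and cl: "closed A"
  shows "A \<in> Psi V E"
proof -
  have AV: "A \<subseteq> V" using Ast unfolding stable_in_def by blast
  have "card T \<le> card A" if T: "stable_in E (cnbhd V E A) T" for T
  proof -
    define g where "g x = (if x \<in> A then x else m x)" for x
    have TN: "T \<subseteq> cnbhd V E A" using T unfolding stable_in_def by blast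
    then have "stable_in E V T" using T AV unfolding stable_in_def cnbhd_def nbhd_def by blast
    then have "inj_on g T" unfolding g_def by (rule fold_inj)
    have "g ` T \<subseteq> A"
    proof
      fix y assume "y \<in> g ` T"
      then obtain t where t: "t \<in> T" "y = g t" by blast
      show "y \<in> A"
      proof (cases "t \<in> A")
        case False
        then obtain a where "a \<in> A" "adj E t a" using t(1) TN unfolding cnbhd_def nbhd_def by blast
        then have "m t \<in> A" using cl adj_sym unfolding closed_def by blast
        then show ?thesis using t False unfolding g_def by simp
      qed (use t in \<open>simp add: g_def\<close>)
    qed
    have "card T = card (g ` T)" using \<open>inj_on g T\<close> by (simp add: card_image)
    also have "\<dots> \<le> card A" using \<open>g ` T \<subseteq> A\<close> stable_finite[OF Ast] by (intro card_mono)
    finally show ?thesis .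
  qed
  moreover have "stable_in E (cnbhd V E A) A" using Ast unfolding stable_in_def cnbhd_def by blast
  ultimately show ?thesis using AV unfolding Psi_def local_max_stable_def max_stable_in_def by blast
qed

lemma Psi_iff: "A \<in> Psi V E \<longleftrightarrow> stable_in E V A \<and> closed A"
proof
  assume A: "A \<in> Psi V E"
  then have "stable_in E V A"
    unfolding Psi_def local_max_stable_def max_stable_in_def stable_in_def by blast
  then show "stable_in E V A \<and> closed A" using Psi_closed[OF A] by blast
qed (use closed_in_Psi in blast)

lemma maximal_stable_in_Psi:
  assumes S: "maximal_stable_in E V S"
  shows "S \<in> Psi V E"
proof -
  have "stable_in E V S" and Sind: "\<forall>x\<in>S. \<forall>y\<in>S. \<not> adj E x y"
    using S unfolding maximal_stable_in_def stable_in_def by auto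
  moreover have "closed S"
    unfolding closed_def
  proof (intro ballI allI impI)
    fix a w assume "a \<in> S" "adj E a w"
    then have "w \<in> V" "w \<notin> S" using adj_V Sind by blast+
    then show "m w \<in> S" using maximal_stable_meets_edge[OF perfect S] by blast
  qed
  ultimately show ?thesis by (simp add: Psi_iff)
qed

text \<open>
  An alternating cycle: a set C of vertices containing no mate of its elements, with a
  fixed-point-free permutation sigma such that every sigma c is adjacent to the mate of c.
  Re-matching each mate m c with sigma c yields a second perfect matching.
\<close>
lemma alternating_cycle_rematch:
  assumes CV: "C \<subseteq> V" and Cne: "C \<noteq> {}" and mC: "\<forall>c\<in>C. m c \<notin> C"
    and \<sigma>: "bij_betw \<sigma> C C" and \<sigma>_adj: "\<forall>c\<in>C. \<sigma> c \<noteq> c \<and> adj E (\<sigma> c) (m c)"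
  shows "\<exists>M'. perfect_matching M' \<and> M' \<noteq> M"
proof -
  define \<tau> where "\<tau> = inv_into C \<sigma>"
  have \<tau>: "\<tau> c \<in> C" "\<sigma> (\<tau> c) = c" if "c \<in> C" for c
    using that \<sigma> unfolding \<tau>_def bij_betw_def by (auto intro: inv_into_into f_inv_into_f)
  have \<tau>\<sigma>: "\<tau> (\<sigma> c) = c" if "c \<in> C" for c
    using that \<sigma> unfolding \<tau>_def bij_betw_def by (simp add: inv_into_f_f)
  have \<sigma>C: "\<sigma> c \<in> C" if "c \<in> C" for c using that \<sigma> bij_betwE by blast
  define p where "p v = (if v \<in> C then m (\<tau> v) else if m v \<in> C then \<sigma> (m v) else m v)" for v
  have "p v \<in> V \<and> p (p v) = v \<and> adj E v (p v)" if v: "v \<in> V" for v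
  proof -
    consider "v \<in> C" | "v \<notin> C" "m v \<in> C" | "v \<notin> C" "m v \<notin> C" by blast
    then show ?thesis
    proof cases
      case 1
      have c: "\<tau> v \<in> C" "\<sigma> (\<tau> v) = v" using \<tau>[OF 1] by auto
      then have cV: "\<tau> v \<in> V" using CV by blast
      have "p (p v) = v" using 1 c mC m_m[OF cV] unfolding p_def by simp
      moreover have "adj E v (p v)" using 1 c \<sigma>_adj unfolding p_def by metis
      ultimately show ?thesis using 1 m_V[OF cV] unfolding p_def by simp
    next
      case 2
      have "p (p v) = v" using 2 \<sigma>C \<tau>\<sigma> m_m[OF v] unfolding p_def by simp
      moreover have "adj E v (p v)" using 2 \<sigma>_adj m_m[OF v] adj_sym unfolding p_def by metis
      ultimately show ?thesis using 2 \<sigma>C CV unfolding p_def by auto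
    next
      case 3
      then show ?thesis using m_m[OF v] m_V[OF v] m_adj[OF v] unfolding p_def by simp
    qed
  qed
  then have M': "perfect_matching (matching_of V p)" "\<forall>v\<in>V. mate (matching_of V p) v = p v"
    using perfect_matching_of by blast+
  obtain c where c: "c \<in> C" using Cne by blast
  then have "c \<in> V" "m c \<in> V" using CV m_V by blast+
  then have "mate (matching_of V p) (m c) = \<sigma> c" using M'(2) c mC m_m unfolding p_def by simp
  moreover have "m (m c) = c" using m_m \<open>c \<in> V\<close> by blast
  ultimately have "matching_of V p \<noteq> M" using \<sigma>_adj c by auto
  then show ?thesis using M'(1) by blast
qed

lemma removal_blocked:
  assumes A: "A \<in> Psi V E" and a: "a \<in> A" and blocked: "A - {a} \<notin> Psi V E"
  shows "\<exists>b\<in>A. b \<noteq> a \<and> adj E b (m a)"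
proof -
  have Ast: "stable_in E V A" and Acl: "closed A" using A Psi_iff by auto
  have "stable_in E V (A - {a})" using Ast by (rule stable_subset) blast
  then have "\<not> closed (A - {a})" using blocked Psi_iff by blast
  then obtain b w where b: "b \<in> A - {a}" "adj E b w" "m w \<notin> A - {a}" unfolding closed_def by blast
  then have "m w = a" using Acl unfolding closed_def by blast
  moreover have "w \<in> V" using adj_V[OF b(2)] by blast
  ultimately have "w = m a" using m_m[of w] by simp
  then show ?thesis using b by blast
qed

lemma extension_blocked:
  assumes X: "X \<in> Psi V E" and Y: "Y \<in> Psi V E"
    and x: "x \<in> X - Y" "m x \<notin> Y" and blocked: "Y \<union> {x} \<notin> Psi V E"
  shows "\<exists>b\<in>X - Y. m b \<notin> Y \<and> b \<noteq> x \<and> adj E x (m b)"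
proof -
  have Xcl: "closed X" and Yst: "stable_in E V Y" and Ycl: "closed Y"
    and XV: "X \<subseteq> V" using X Y Psi_iff unfolding stable_in_def by auto
  have xV: "x \<in> V" using x XV by blast
  have Y_x: "\<not> adj E y x" if "y \<in> Y" for y
    using that Ycl x(2) unfolding closed_def by blast
  have "stable_in E V (Y \<union> {x})"
    using Yst xV Y_x adj_sym adj_irrefl unfolding stable_in_def by auto
  then have "\<not> closed (Y \<union> {x})" using blocked Psi_iff by blast
  then obtain z w where z: "z \<in> Y \<union> {x}" "adj E z w" "m w \<notin> Y \<union> {x}"
    unfolding closed_def by blast
  have "z = x" using z Ycl unfolding closed_def by blast
  then have xw: "adj E x w" using z(2) by simp
  have wV: "w \<in> V" using adj_V[OF xw] by blast
  have "m w \<in> X" using Xcl x(1) xw unfolding closed_def by blast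
  moreover have "w \<notin> Y" using Y_x xw adj_sym by blast
  ultimately show ?thesis using z(3) m_m[OF wV] xw by (intro bexI[of _ "m w"]) auto
qed

text \<open>If |X| = |Y| + 1 for stable X, some element of X - Y has its mate outside Y:
  mates of the other elements of X - Y lie injectively in Y - X.\<close>
lemma larger_stable_set_unmatched:
  assumes Xst: "stable_in E V X" and Yst: "stable_in E V Y" and card: "card X = card Y + 1"
  shows "\<exists>x\<in>X - Y. m x \<notin> Y"
proof (rule ccontr)
  assume "\<not> ?thesis"
  then have "m ` (X - Y) \<subseteq> Y - X"
    using Xst m_adj unfolding stable_in_def by blast
  moreover have "inj_on m (X - Y)" using Xst m_inj unfolding stable_in_def inj_on_def by blast
  ultimately have "card (X - Y) \<le> card (Y - X)"
    using stable_finite[OF Yst] by (metis card_image card_mono finite_Diff)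
  moreover have "card (X - Y) = card X - card (X \<inter> Y)" "card (Y - X) = card Y - card (X \<inter> Y)"
    using stable_finite[OF Xst] stable_finite[OF Yst] by (auto simp: card_Diff_subset_Int Int_commute)
  moreover have "card (X \<inter> Y) \<le> card Y" using stable_finite[OF Yst] by (intro card_mono) auto
  ultimately show False using card by linarith
qed

lemma unique_no_alternating_cycle:
  assumes unique: "\<forall>M'. perfect_matching M' \<longrightarrow> M' = M"
    and A: "stable_in E V A" and C: "C \<subseteq> A" "C \<noteq> {}"
    and \<sigma>: "bij_betw \<sigma> C C" "\<forall>c\<in>C. \<sigma> c \<noteq> c \<and> adj E (\<sigma> c) (m c)"
  shows False
proof -
  have "C \<subseteq> V" and "\<forall>c\<in>C. m c \<notin> C" using A C(1) m_adj unfolding stable_in_def by blast+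
  then obtain M' where "perfect_matching M'" "M' \<noteq> M"
    using alternating_cycle_rematch[OF _ C(2) _ \<sigma>] by blast
  then show False using unique by blast
qed

text \<open>With a unique perfect matching, Psi(G) is a greedoid: a failure of accessibility or of
  exchange yields a finite set in which every element has a distinct partner of the required
  kind, hence an alternating cycle.\<close>
lemma unique_imp_greedoid:
  assumes unique: "\<forall>M'. perfect_matching M' \<longrightarrow> M' = M"
  shows "greedoid V (Psi V E)"
  unfolding greedoid_def
proof (intro conjI ballI impI)
  show "Psi V E \<noteq> {}" using closed_in_Psi[of "{}"] unfolding stable_in_def closed_def by blast
  show "Psi V E \<subseteq> Pow V" unfolding Psi_def local_max_stable_def by blast
next
  fix A assume A: "A \<in> Psi V E" and "A \<noteq> {}"
  show "\<exists>a\<in>A. A - {a} \<in> Psi V E"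
  proof (rule ccontr)
    assume "\<not> ?thesis"
    then have "\<forall>a\<in>A. \<exists>b\<in>A. b \<noteq> a \<and> adj E b (m a)" using removal_blocked[OF A] by blast
    moreover have Ast: "stable_in E V A" using A Psi_iff by blast
    ultimately obtain C \<sigma> where "C \<subseteq> A" "C \<noteq> {}" "bij_betw \<sigma> C C"
      "\<forall>c\<in>C. \<sigma> c \<noteq> c \<and> adj E (\<sigma> c) (m c)"
      using finite_successor_cycle[OF stable_finite \<open>A \<noteq> {}\<close>, of "\<lambda>a b. adj E b (m a)"] by blast
    then show False by (rule unique_no_alternating_cycle[OF unique Ast])
  qed
next
  fix X Y assume X: "X \<in> Psi V E" and Y: "Y \<in> Psi V E" and card: "card X = card Y + 1"
  show "\<exists>x\<in>X - Y. Y \<union> {x} \<in> Psi V E"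
  proof (rule ccontr)
    assume none: "\<not> ?thesis"
    define D where "D = {x \<in> X - Y. m x \<notin> Y}"
    have Xst: "stable_in E V X" and Yst: "stable_in E V Y" using X Y Psi_iff by auto
    have "D \<noteq> {}" using larger_stable_set_unmatched[OF Xst Yst card] unfolding D_def by blast
    moreover have "\<forall>x\<in>D. \<exists>b\<in>D. b \<noteq> x \<and> adj E x (m b)"
      using extension_blocked[OF X Y] none unfolding D_def by blast
    moreover have "finite D" using stable_finite[OF Xst] unfolding D_def by simp
    ultimately obtain C \<sigma> where C: "C \<subseteq> D" "C \<noteq> {}" "bij_betw \<sigma> C C"
      "\<forall>c\<in>C. \<sigma> c \<noteq> c \<and> adj E c (m (\<sigma> c))"
      using finite_successor_cycle[of D "\<lambda>x b. adj E x (m b)"] by blast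
    then obtain \<tau> where "bij_betw \<tau> C C" "\<forall>c\<in>C. \<tau> c \<noteq> c \<and> adj E (\<tau> c) (m c)"
      using inverse_permutation[of \<sigma> C "\<lambda>x b. adj E x (m b)"] by blast
    moreover have "C \<subseteq> X" using C(1) unfolding D_def by blast
    ultimately show False using unique_no_alternating_cycle[OF unique Xst _ C(2)] by blast
  qed
qed

lemma matching_difference:
  assumes M': "perfect_matching M'" and ne: "M' \<noteq> M"
  defines "D \<equiv> {y \<in> V. mate M' y \<noteq> m y}"
  shows "D \<noteq> {}" and "\<And>y. y \<in> D \<Longrightarrow> m (mate M' y) \<in> D - {y} \<and> adj E y (mate M' y)"
proof -
  show "D \<noteq> {}"
  proof
    assume "D = {}"
    then have "matching_of V (mate M') = matching_of V m" unfolding D_def matching_of_def by auto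
    then show False using ne perfect_matching_eq_mate[OF M'] perfect_matching_eq_mate[OF perfect] by simp
  qed
  fix y assume y: "y \<in> D"
  then have yV: "y \<in> V" and differ: "mate M' y \<noteq> m y" unfolding D_def by auto
  define z where "z = m (mate M' y)"
  have m'yV: "mate M' y \<in> V" using mate_V[OF M' yV] .
  then have zV: "z \<in> V" and mz: "m z = mate M' y" unfolding z_def using m_V m_m by auto
  have "z \<noteq> y" using mz differ by auto
  moreover have "mate M' z \<noteq> m z" using mz mate_inj[OF M' zV yV] \<open>z \<noteq> y\<close> by auto
  ultimately show "m (mate M' y) \<in> D - {y} \<and> adj E y (mate M' y)"
    using zV mate_adj[OF M' yV] unfolding D_def z_def by blast
qed

text \<open>If Psi(G) is a greedoid the perfect matching is unique: by accessibility no local maximum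
  stable set meets the difference set D of a second perfect matching, since such a set is closed
  and D is closed under the move above; yet a maximal stable set through a vertex of D lies in Psi.\<close>
lemma greedoid_imp_unique:
  assumes gr: "greedoid V (Psi V E)" and M': "perfect_matching M'"
  shows "M' = M"
proof (rule ccontr)
  assume ne: "M' \<noteq> M"
  define D where "D = {y \<in> V. mate M' y \<noteq> m y}"
  note D = matching_difference[OF M' ne, folded D_def]
  have disjoint: "X \<inter> D = {}" if "X \<in> Psi V E" for X
    using gr finite_V that
  proof (rule greedoid_induct[where P = "\<lambda>X. X \<inter> D = {}"])
    fix X x assume X: "X \<in> Psi V E" and x: "x \<in> X" and IH: "(X - {x}) \<inter> D = {}"
    show "X \<inter> D = {}"
    proof (rule ccontr)
      assume "X \<inter> D \<noteq> {}"
      then obtain y where y: "y \<in> X" "y \<in> D" by blast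
      then have "m (mate M' y) \<in> X" using Psi_closed[OF X] D(2) unfolding closed_def by blast
      then show False using IH y D(2)[OF y(2)] by blast
    qed
  qed simp
  obtain y where y: "y \<in> D" using D(1) by blast
  then have "y \<in> V" unfolding D_def by blast
  then obtain S where "{y} \<subseteq> S" "maximal_stable_in E V S"
    using maximal_stable_extend[OF finite_V stable_singleton] by blast
  then show False using disjoint[OF maximal_stable_in_Psi] y by blast
qed

end

text \<open>The main theorem: with a perfect matching M0 in hand, uniqueness of maximum matchings is
  uniqueness of perfect matchings, and both directions were shown above.\<close>
theorem theorem10:
  fixes V :: "'a set" and E :: "'a set set"
  assumes "graph V E"
    and "very_well_covered V E"
    and "triangle_free V E"
  shows "greedoid V (Psi V E) \<longleftrightarrow> (\<exists>!M. maximum_matching E M)"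
proof -
  interpret very_well_covered_graph V E using assms(1,2) by unfold_locales
  obtain M0 where M0: "perfect_matching M0" using perfect_matching_exists by blast
  then interpret perfectly_matched V E M0 by unfold_locales
  have "(\<exists>!M. maximum_matching E M) \<longleftrightarrow> (\<forall>M. perfect_matching M \<longrightarrow> M = M0)"
    using maximum_iff_perfect[OF M0] M0 by blast
  then show ?thesis using greedoid_imp_unique unique_imp_greedoid by blast
qed

end
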